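(* Let $(q_n)_{n\geq1}$ be nonnegative reals with $\sum_{n\geq1}q_n=1$ and let $f(x)=\sum_{n\geq1}q_nx^n$ for $x\in[0,1]$. Let $k\geq1$ and let $(p_w)$ be reals in $[0,1]$ indexed by words $w$ over $\{0,1\}$ with $l(w)\leq k-1$. Define functions $f_w$ on $[0,1]$ for words of length at most $k$ by $f_\emptyset=f$ and $$f_{w1}(x)=f_w(p_wx+1-p_w)-f_w(1-p_w),\qquad f_{w0}(x)=f_w((1-p_w)x).$$ Define $\delta_\emptyset=1$, $\delta_{w0}=(1-p_w)\delta_w$, $\delta_{w1}=p_w\delta_w$, and $y_w=\sum_{v:\ l(v)=l(w),\ \#(v)<\#(w)}\delta_v$. Then for every word $w$ of length at most $k$ and every $x\in[0,1]$, $$f'_w(x)=\delta_w\,f'(y_w+\delta_wx).$$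
   Context: Words are finite sequences over $\{0,1\}$; $\emptyset$ is the empty word, $l(w)$ its length, $w0$, $w1$ denote appending a letter. $\#(w)$ is the integer whose binary representation is $w$, first letter most significant. Each $f_w$ is a power series with nonnegative coefficients converging on $[0,1]$; derivatives are the termwise differentiated series, whose value at $x=1$ is taken in $[0,+\infty]$. *)

theory Defs
  imports Complex_Main "HOL-Library.Extended_Nonnegative_Real"
begin

text \<open>Words over {0,1} are bool lists (False = 0, True = 1), first letter = head;
  appending a letter b to w is w @ [b].\<close>

definition num :: "bool list \<Rightarrow> nat" where
  "num w = foldl (\<lambda>acc b. 2 * acc + (if b then 1 else 0)) 0 w"

primrec fw_rev :: "(real \<Rightarrow> real) \<Rightarrow> (bool list \<Rightarrow> real) \<Rightarrow> bool list \<Rightarrow> real \<Rightarrow> real" where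
  "fw_rev f p [] = f"
| "fw_rev f p (b # rw) =
     (let g = fw_rev f p rw; pp = p (rev rw) in
      if b then (\<lambda>x. g (pp * x + 1 - pp) - g (1 - pp)) else (\<lambda>x. g ((1 - pp) * x)))"

definition fw :: "(real \<Rightarrow> real) \<Rightarrow> (bool list \<Rightarrow> real) \<Rightarrow> bool list \<Rightarrow> real \<Rightarrow> real" where
  "fw f p w = fw_rev f p (rev w)"

lemma fw_Nil: "fw f p [] = f" by (simp add: fw_def)
lemma fw_snoc1: "fw f p (w @ [True]) = (\<lambda>x. fw f p w (p w * x + 1 - p w) - fw f p w (1 - p w))"
  by (simp add: fw_def Let_def)
lemma fw_snoc0: "fw f p (w @ [False]) = (\<lambda>x. fw f p w ((1 - p w) * x))"
  by (simp add: fw_def Let_def)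

primrec delta_rev :: "(bool list \<Rightarrow> real) \<Rightarrow> bool list \<Rightarrow> real" where
  "delta_rev p [] = 1"
| "delta_rev p (b # rw) = (if b then p (rev rw) else 1 - p (rev rw)) * delta_rev p rw"

definition delta :: "(bool list \<Rightarrow> real) \<Rightarrow> bool list \<Rightarrow> real" where
  "delta p w = delta_rev p (rev w)"

lemma delta_Nil: "delta p [] = 1" by (simp add: delta_def)
lemma delta_snoc0: "delta p (w @ [False]) = (1 - p w) * delta p w" by (simp add: delta_def)
lemma delta_snoc1: "delta p (w @ [True]) = p w * delta p w" by (simp add: delta_def)

definition yw :: "(bool list \<Rightarrow> real) \<Rightarrow> bool list \<Rightarrow> real" where
  "yw p w = (\<Sum>v\<in>{v. length v = length w \<and> num v < num w}. delta p v)"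

text \<open>The (nonnegative) power series coefficients of a function given on [0,1]
  by a power series with nonnegative coefficients, and its termwise derivative,
  valued in [0,+\<infinity>].\<close>
definition ps_coeffs :: "(real \<Rightarrow> real) \<Rightarrow> nat \<Rightarrow> real" where
  "ps_coeffs g = (SOME c. (\<forall>n. 0 \<le> c n) \<and> (\<forall>x\<in>{0..1}. (\<lambda>n. c n * x ^ n) sums g x))"

definition ps_deriv :: "(real \<Rightarrow> real) \<Rightarrow> real \<Rightarrow> ennreal" where
  "ps_deriv g x = (\<Sum>n. ennreal (real (Suc n) * ps_coeffs g (Suc n) * x ^ n))"

end

theory Submission
  imports Defs "HOL-Complex_Analysis.Cauchy_Integral_Formula"
begin

text \<open>Each \<open>f\<^sub>w\<^sub>b\<close> arises from \<open>f\<^sub>w\<close> by an affine substitution \<open>x \<mapsto> a x + s\<close> with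
  \<open>a, s \<ge> 0\<close> and \<open>a + s \<le> 1\<close>, followed for \<open>b = 1\<close> by removing the constant term.
  Expanding \<open>(a x + s)\<^sup>n\<close> binomially and exchanging the order of summation, which is
  legitimate for nonnegative terms once all sums are taken in \<open>[0,\<infinity>]\<close>, shows that
  \<open>f\<^sub>w\<^sub>b\<close> again has a power series with nonnegative coefficients and that its termwise
  derivative is \<open>a f'\<^sub>w(a x + s)\<close>, also where this is infinite. Along \<open>w\<close> the affine
  maps compose to \<open>x \<mapsto> y\<^sub>w + \<delta>\<^sub>w x\<close> and the factors \<open>a\<close> multiply to \<open>\<delta>\<^sub>w\<close>.\<close>

section \<open>Series in \<open>[0,\<infinity>]\<close> and affine substitution\<close>

lemma suminf_ennreal_split_head: "(\<Sum>n. f n :: ennreal) = f 0 + (\<Sum>n. f (Suc n))"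
proof -
  have "(\<lambda>n. f (Suc n)) sums (\<Sum>n. f (Suc n))" by (rule summable_sums[OF summableI])
  then have "f sums ((\<Sum>n. f (Suc n)) + f 0)" by (rule sums_Suc)
  then show ?thesis by (simp add: sums_unique[symmetric] add.commute)
qed

lemma suminf_ennreal_commute: "(\<Sum>i. \<Sum>j. f i j :: ennreal) = (\<Sum>j. \<Sum>i. f i j)"
proof -
  have "(\<Sum>j. \<Sum>i. f i j) = (\<integral>\<^sup>+j. (\<Sum>i. f i j) \<partial>count_space UNIV)"
    by (simp add: nn_integral_count_space_nat)
  also have "\<dots> = (\<Sum>i. \<integral>\<^sup>+j. f i j \<partial>count_space UNIV)"
    by (rule nn_integral_suminf) simp
  also have "\<dots> = (\<Sum>i. \<Sum>j. f i j)"
    by (simp add: nn_integral_count_space_nat)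
  finally show ?thesis ..
qed

lemma suminf_ennreal_binomial:
  fixes u v :: real
  assumes "0 \<le> u" "0 \<le> v"
  shows "(\<Sum>j. ennreal (real (n choose j) * u ^ j * v ^ (n - j))) = ennreal ((u + v) ^ n)"
proof -
  have "(\<Sum>j. ennreal (real (n choose j) * u ^ j * v ^ (n - j)))
      = (\<Sum>j\<le>n. ennreal (real (n choose j) * u ^ j * v ^ (n - j)))"
    by (rule suminf_finite) (auto simp: not_le binomial_eq_0)
  also have "\<dots> = ennreal ((u + v) ^ n)"
    using assms by (simp add: binomial_ring)
  finally show ?thesis .
qed

definition enn_powser :: "(nat \<Rightarrow> real) \<Rightarrow> real \<Rightarrow> ennreal" where
  "enn_powser c x = (\<Sum>n. ennreal (c n * x ^ n))"

text \<open>The coefficient of \<open>x\<^sup>j\<close> in \<open>\<Sum>\<^sub>n c\<^sub>n (a x + b)\<^sup>n\<close>.\<close>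

definition affine_coeffs :: "(nat \<Rightarrow> real) \<Rightarrow> real \<Rightarrow> real \<Rightarrow> nat \<Rightarrow> ennreal" where
  "affine_coeffs c a b j = (\<Sum>n. ennreal (c n * (real (n choose j) * a ^ j * b ^ (n - j))))"

lemma enn_powser_affine:
  assumes "\<And>n. 0 \<le> c n" "0 \<le> a" "0 \<le> b" "0 \<le> t"
  shows "(\<Sum>j. affine_coeffs c a b j * ennreal (t ^ j)) = enn_powser c (a * t + b)"
proof -
  have term_eq: "ennreal (c n * (real (n choose j) * a ^ j * b ^ (n - j))) * ennreal (t ^ j)
      = ennreal (c n) * ennreal (real (n choose j) * (a * t) ^ j * b ^ (n - j))" for n j
    using assms by (simp add: ennreal_mult[symmetric] power_mult_distrib mult_ac)
  have "(\<Sum>j. affine_coeffs c a b j * ennreal (t ^ j))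
      = (\<Sum>j. \<Sum>n. ennreal (c n) * ennreal (real (n choose j) * (a * t) ^ j * b ^ (n - j)))"
    by (simp add: affine_coeffs_def term_eq flip: ennreal_suminf_multc)
  also have "\<dots> = (\<Sum>n. ennreal (c n) * (\<Sum>j. ennreal (real (n choose j) * (a * t) ^ j * b ^ (n - j))))"
    by (simp add: suminf_ennreal_commute[of "\<lambda>j n. _ n * _ j n"])
  also have "\<dots> = (\<Sum>n. ennreal (c n) * ennreal ((a * t + b) ^ n))"
    using assms by (simp add: suminf_ennreal_binomial del: suminf_ennreal)
  also have "\<dots> = enn_powser c (a * t + b)"
    unfolding enn_powser_def using assms by (simp add: ennreal_mult)
  finally show ?thesis .
qed

lemma affine_coeffs_diffs:
  assumes "\<And>n. 0 \<le> c n" "0 \<le> a" "0 \<le> b"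
  shows "ennreal (real (Suc j)) * affine_coeffs c a b (Suc j) = ennreal a * affine_coeffs (diffs c) a b j"
proof -
  have term_eq: "ennreal (real (Suc j)) * ennreal (c (Suc m) * (real (Suc m choose Suc j) * a ^ Suc j * b ^ (Suc m - Suc j)))
      = ennreal a * ennreal (diffs c m * (real (m choose j) * a ^ j * b ^ (m - j)))" for m
  proof -
    have "real (Suc j) * (c (Suc m) * (real (Suc m choose Suc j) * a ^ Suc j * b ^ (Suc m - Suc j)))
        = (real (Suc j) * real (Suc m choose Suc j)) * (c (Suc m) * a * a ^ j * b ^ (m - j))"
      by (simp only: power_Suc diff_Suc_Suc mult_ac)
    also have "real (Suc j) * real (Suc m choose Suc j) = real (Suc m) * real (m choose j)"
      by (metis Suc_times_binomial of_nat_mult)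
    also have "\<dots> * (c (Suc m) * a * a ^ j * b ^ (m - j)) = a * (diffs c m * (real (m choose j) * a ^ j * b ^ (m - j)))"
      by (simp only: diffs_def mult_ac)
    finally show ?thesis
      using assms(2) by (metis ennreal_mult' of_nat_0_le_iff)
  qed
  have "ennreal (real (Suc j)) * affine_coeffs c a b (Suc j)
      = (\<Sum>m. ennreal (real (Suc j)) * ennreal (c (Suc m) * (real (Suc m choose Suc j) * a ^ Suc j * b ^ (Suc m - Suc j))))"
    unfolding affine_coeffs_def ennreal_suminf_cmult[symmetric] by (subst suminf_ennreal_split_head) simp
  also have "\<dots> = (\<Sum>m. ennreal a * ennreal (diffs c m * (real (m choose j) * a ^ j * b ^ (m - j))))"
    by (simp only: term_eq)
  also have "\<dots> = ennreal a * affine_coeffs (diffs c) a b j"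
    unfolding affine_coeffs_def by simp
  finally show ?thesis .
qed

section \<open>Power series with nonnegative coefficients on \<open>[0,1]\<close>\<close>

definition has_nonneg_powser :: "(real \<Rightarrow> real) \<Rightarrow> (nat \<Rightarrow> real) \<Rightarrow> bool" where
  "has_nonneg_powser g c \<longleftrightarrow> (\<forall>n. 0 \<le> c n) \<and> (\<forall>x\<in>{0..1}. (\<lambda>n. c n * x ^ n) sums g x)"

lemma norm_powser_term_le:
  fixes x :: real
  assumes "0 \<le> c" "\<bar>x\<bar> \<le> 1"
  shows "norm (c * x ^ n) \<le> c"
proof -
  have "\<bar>x\<bar> ^ n \<le> 1"
    using assms by (simp add: power_le_one)
  then show ?thesis
    using assms by (simp add: abs_mult power_abs mult_left_le)
qed

lemma has_nonneg_powser_suminf: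
  assumes "\<And>n. 0 \<le> c n" "summable c"
  shows "has_nonneg_powser (\<lambda>x. \<Sum>n. c n * x ^ n) c"
  unfolding has_nonneg_powser_def
proof (intro conjI allI ballI assms(1))
  fix x :: real
  assume "x \<in> {0..1}"
  then have "norm (c n * x ^ n) \<le> c n" for n
    using assms(1) by (intro norm_powser_term_le) auto
  then have "summable (\<lambda>n. c n * x ^ n)"
    by (rule summable_comparison_test'[OF assms(2)])
  then show "(\<lambda>n. c n * x ^ n) sums (\<Sum>n. c n * x ^ n)"
    by (rule summable_sums)
qed

lemma summable_nonneg_powser:
  assumes "has_nonneg_powser g c" "\<bar>x\<bar> \<le> 1"
  shows "summable (\<lambda>n. c n * x ^ n)"
proof (rule summable_comparison_test')
  have "1 \<in> {0..1::real}"
    by simp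
  then have "(\<lambda>n. c n * 1 ^ n) sums g 1"
    using assms(1) unfolding has_nonneg_powser_def by blast
  then show "summable c"
    by (simp add: sums_iff)
  show "norm (c n * x ^ n) \<le> c n" for n
    using assms by (intro norm_powser_term_le) (auto simp: has_nonneg_powser_def)
qed

lemma has_nonneg_powser_nonneg:
  assumes "has_nonneg_powser g c" "x \<in> {0..1}"
  shows "0 \<le> g x"
  using assms sums_le[OF _ sums_zero, of "\<lambda>n. c n * x ^ n" "g x"]
  by (auto simp: has_nonneg_powser_def)

lemma enn_powser_eq:
  assumes "has_nonneg_powser g c" "x \<in> {0..1}"
  shows "enn_powser c x = ennreal (g x)"
  using assms unfolding has_nonneg_powser_def enn_powser_def
  by (intro suminf_ennreal_eq) auto

lemma powser_eq_0_if_vanishing_right: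
  fixes a :: "nat \<Rightarrow> real"
  assumes "0 < r"
    and summable: "\<And>x. \<bar>x\<bar> < r \<Longrightarrow> summable (\<lambda>n. a n * x ^ n)"
    and vanish: "\<And>x. 0 \<le> x \<Longrightarrow> x < r \<Longrightarrow> (\<Sum>n. a n * x ^ n) = 0"
  shows "a m = 0"
proof (rule ccontr)
  assume "a m \<noteq> 0"
  have at_0: "(\<Sum>n. a n * 0 ^ n) = 0"
    using vanish[of 0] \<open>0 < r\<close> by simp
  then have "0 < m"
    using \<open>a m \<noteq> 0\<close> by (cases m) (simp_all add: powser_zero)
  have sums: "(\<lambda>n. a n * (z - 0) ^ n) sums (\<Sum>n. a n * z ^ n)" if "norm (z - 0) < r" for z
    using summable[of z] that by (simp add: summable_sums)
  obtain s where "0 < s" and nonzero: "\<And>z. z \<in> cball 0 s - {0} \<Longrightarrow> (\<Sum>n. a n * z ^ n) \<noteq> 0"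
    using powser_0_nonzero[OF \<open>0 < r\<close> sums at_0 \<open>a m \<noteq> 0\<close> \<open>0 < m\<close>] by blast
  define z where "z = min s (r / 2)"
  have "z \<in> cball 0 s - {0}" "0 \<le> z" "z < r"
    using \<open>0 < s\<close> \<open>0 < r\<close> by (auto simp: z_def)
  then show False
    using nonzero vanish by blast
qed

lemma has_nonneg_powser_unique:
  assumes "has_nonneg_powser g c" "has_nonneg_powser g d"
  shows "c = d"
proof
  fix m
  have "(\<lambda>n. c n - d n) m = 0"
  proof (rule powser_eq_0_if_vanishing_right[OF zero_less_one])
    fix x :: real
    assume "\<bar>x\<bar> < 1"
    then show "summable (\<lambda>n. (c n - d n) * x ^ n)"
      using summable_diff[OF summable_nonneg_powser[OF assms(1)] summable_nonneg_powser[OF assms(2)]]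
      by (simp add: left_diff_distrib)
  next
    fix x :: real
    assume "0 \<le> x" "x < 1"
    then have "(\<lambda>n. c n * x ^ n) sums g x" "(\<lambda>n. d n * x ^ n) sums g x"
      using assms by (auto simp: has_nonneg_powser_def)
    from sums_diff[OF this] show "(\<Sum>n. (c n - d n) * x ^ n) = 0"
      by (simp add: left_diff_distrib sums_iff)
  qed
  then show "c m = d m"
    by simp
qed

lemma ps_deriv_eq:
  assumes "has_nonneg_powser g c"
  shows "ps_deriv g = enn_powser (diffs c)"
proof -
  have "has_nonneg_powser g (ps_coeffs g)"
    unfolding ps_coeffs_def has_nonneg_powser_def[symmetric] by (rule someI[of "has_nonneg_powser g", OF assms])
  then have "ps_coeffs g = c"
    using has_nonneg_powser_unique assms by blast
  then show ?thesis
    by (simp add: fun_eq_iff ps_deriv_def enn_powser_def diffs_def)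
qed

lemma affine_unit_interval:
  fixes a b x :: real
  assumes "0 \<le> a" "0 \<le> b" "a + b \<le> 1" "x \<in> {0..1}"
  shows "a * x + b \<in> {0..1}"
proof -
  have "a * x \<le> a"
    using assms by (simp add: mult_left_le)
  then show ?thesis
    using assms by simp
qed

lemma enn_powser_affine_eq:
  assumes g: "has_nonneg_powser g c" and ab: "0 \<le> a" "0 \<le> b" "a + b \<le> 1" and x: "x \<in> {0..1}"
  shows "(\<Sum>j. affine_coeffs c a b j * ennreal (x ^ j)) = ennreal (g (a * x + b))"
proof -
  have "\<And>n. 0 \<le> c n"
    using g by (simp add: has_nonneg_powser_def)
  then have "(\<Sum>j. affine_coeffs c a b j * ennreal (x ^ j)) = enn_powser c (a * x + b)"
    using ab x by (intro enn_powser_affine) auto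
  also have "\<dots> = ennreal (g (a * x + b))"
    by (rule enn_powser_eq[OF g affine_unit_interval[OF ab x]])
  finally show ?thesis .
qed

lemma affine_coeffs_less_top:
  assumes "has_nonneg_powser g c" "0 \<le> a" "0 \<le> b" "a + b \<le> 1"
  shows "affine_coeffs c a b j < top"
proof -
  have "(\<Sum>j. affine_coeffs c a b j * ennreal (1 ^ j)) < top"
    using enn_powser_affine_eq[OF assms, of 1] by simp
  then show ?thesis
    by (simp add: ennreal_suminf_lessD)
qed

lemma has_nonneg_powser_affine:
  assumes g: "has_nonneg_powser g c" and ab: "0 \<le> a" "0 \<le> b" "a + b \<le> 1"
  shows "has_nonneg_powser (\<lambda>x. g (a * x + b)) (\<lambda>j. enn2real (affine_coeffs c a b j))"
  unfolding has_nonneg_powser_def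
proof (intro conjI allI ballI enn2real_nonneg)
  fix x :: real
  assume x: "x \<in> {0..1}"
  let ?d = "\<lambda>j. enn2real (affine_coeffs c a b j) * x ^ j"
  have d_nonneg: "0 \<le> ?d j" for j
    using x by simp
  have "ennreal (?d j) = affine_coeffs c a b j * ennreal (x ^ j)" for j
    using x affine_coeffs_less_top[OF assms] by (simp add: ennreal_mult'')
  then have "(\<Sum>j. ennreal (?d j)) = (\<Sum>j. affine_coeffs c a b j * ennreal (x ^ j))"
    by (simp only:)
  also have "\<dots> = ennreal (g (a * x + b))"
    by (rule enn_powser_affine_eq[OF assms x])
  finally have "(\<lambda>j. ennreal (?d j)) sums ennreal (g (a * x + b))"
    using summable_sums[OF summableI, of "\<lambda>j. ennreal (?d j)"] by (simp only:)
  moreover have "0 \<le> g (a * x + b)"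
    by (rule has_nonneg_powser_nonneg[OF g affine_unit_interval[OF ab x]])
  ultimately show "?d sums g (a * x + b)"
    by (rule iffD1[OF sums_ennreal[OF d_nonneg], rotated])
qed

lemma ps_deriv_affine:
  assumes g: "has_nonneg_powser g c" and ab: "0 \<le> a" "0 \<le> b" "a + b \<le> 1" and "0 \<le> x"
  shows "ps_deriv (\<lambda>x. g (a * x + b)) x = ennreal a * ps_deriv g (a * x + b)"
proof -
  have c: "\<And>n. 0 \<le> c n" and dc: "\<And>n. 0 \<le> diffs c n"
    using g by (auto simp: has_nonneg_powser_def diffs_def)
  have "ps_deriv (\<lambda>x. g (a * x + b)) x
      = (\<Sum>j. ennreal (real (Suc j)) * affine_coeffs c a b (Suc j) * ennreal (x ^ j))"
    unfolding ps_deriv_eq[OF has_nonneg_powser_affine[OF g ab]] enn_powser_def diffs_def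
    using \<open>0 \<le> x\<close> affine_coeffs_less_top[OF g ab] by (simp add: ennreal_mult'' mult.assoc)
  also have "\<dots> = ennreal a * (\<Sum>j. affine_coeffs (diffs c) a b j * ennreal (x ^ j))"
    by (simp only: affine_coeffs_diffs[OF c ab(1,2)] mult.assoc ennreal_suminf_cmult)
  also have "\<dots> = ennreal a * ps_deriv g (a * x + b)"
    using enn_powser_affine[OF dc ab(1,2) \<open>0 \<le> x\<close>] by (simp add: ps_deriv_eq[OF g])
  finally show ?thesis .
qed

lemma has_nonneg_powser_minus_const:
  assumes "has_nonneg_powser g c"
  shows "has_nonneg_powser (\<lambda>x. g x - g 0) (c(0 := 0))"
  unfolding has_nonneg_powser_def
proof (intro conjI allI ballI)
  show "0 \<le> (c(0 := 0)) n" for n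
    using assms by (simp add: has_nonneg_powser_def)
  have "g 0 = c 0"
    using assms powser_sums_zero[of c] sums_unique2 by (force simp: has_nonneg_powser_def)
  fix x :: real
  assume "x \<in> {0..1}"
  then have "(\<lambda>n. c n * x ^ n) sums g x"
    using assms by (simp add: has_nonneg_powser_def)
  from sums_diff[OF this sums_single[of 0 "\<lambda>_. c 0"]]
  have "(\<lambda>n. c n * x ^ n - (if n = 0 then c 0 else 0)) sums (g x - g 0)"
    using \<open>g 0 = c 0\<close> by simp
  moreover have "(\<lambda>n. c n * x ^ n - (if n = 0 then c 0 else 0)) = (\<lambda>n. (c(0 := 0)) n * x ^ n)"
    by (simp add: fun_eq_iff)
  ultimately show "(\<lambda>n. (c(0 := 0)) n * x ^ n) sums (g x - g 0)"
    by simp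
qed

lemma ps_deriv_minus_const:
  assumes "has_nonneg_powser g c"
  shows "ps_deriv (\<lambda>x. g x - g 0) = ps_deriv g"
  using ps_deriv_eq[OF assms] ps_deriv_eq[OF has_nonneg_powser_minus_const[OF assms]]
  by (simp add: diffs_def)

section \<open>The recursion along words\<close>

lemma num_snoc: "num (w @ [b]) = 2 * num w + (if b then 1 else 0)"
  by (simp add: num_def)

lemma num_eq_imp_eq: "length u = length v \<Longrightarrow> num u = num v \<Longrightarrow> u = v"
proof (induction u arbitrary: v rule: rev_induct)
  case Nil
  then show ?case by simp
next
  case (snoc b u)
  then obtain v' c where v: "v = v' @ [c]"
    by (cases v rule: rev_cases) auto
  with snoc.prems have "2 * num u + (if b then 1 else 0) = 2 * num v' + (if c then 1 else 0)"
    by (simp add: num_snoc)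
  then have "num u = num v'" "b = c"
    by (auto split: if_splits; presburger)+
  with snoc v show ?case
    by auto
qed

lemma finite_bool_lists_length: "finite {v :: bool list. length v = n \<and> P v}"
  by (rule finite_subset[OF _ finite_lists_length_eq[of "UNIV :: bool set" n]]) auto

lemma delta_snoc: "delta p (w @ [b]) = (if b then p w else 1 - p w) * delta p w"
  by (cases b) (simp_all add: delta_snoc0 delta_snoc1)

lemma yw_Nil: "yw p [] = 0"
  by (simp add: yw_def num_def)

lemma yw_snoc_False: "yw p (w @ [False]) = yw p w"
proof -
  let ?A = "{v. length v = length w \<and> num v < num w}"
  have "{v. length v = length (w @ [False]) \<and> num v < num (w @ [False])}
      = (\<lambda>v. v @ [False]) ` ?A \<union> (\<lambda>v. v @ [True]) ` ?A"
  proof (intro equalityI subsetI)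
    fix v
    assume "v \<in> {v. length v = length (w @ [False]) \<and> num v < num (w @ [False])}"
    then obtain u b where "v = u @ [b]" "length u = length w" "num (u @ [b]) < num (w @ [False])"
      by (cases v rule: rev_cases) auto
    then show "v \<in> (\<lambda>v. v @ [False]) ` ?A \<union> (\<lambda>v. v @ [True]) ` ?A"
      by (cases b) (auto simp: num_snoc)
  qed (auto simp: num_snoc)
  then have "yw p (w @ [False]) = sum (delta p) ((\<lambda>v. v @ [False]) ` ?A \<union> (\<lambda>v. v @ [True]) ` ?A)"
    by (simp add: yw_def)
  also have "\<dots> = (\<Sum>v\<in>?A. delta p (v @ [False])) + (\<Sum>v\<in>?A. delta p (v @ [True]))"
    by (subst sum.union_disjoint) (auto simp: finite_bool_lists_length sum.reindex inj_on_def)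
  also have "\<dots> = yw p w"
    unfolding yw_def delta_snoc0 delta_snoc1 sum.distrib[symmetric] by (simp add: algebra_simps)
  finally show ?thesis .
qed

lemma yw_snoc_True: "yw p (w @ [True]) = yw p (w @ [False]) + delta p (w @ [False])"
proof -
  let ?B = "{v. length v = length (w @ [False]) \<and> num v < num (w @ [False])}"
  have "{v. length v = length (w @ [True]) \<and> num v < num (w @ [True])} = insert (w @ [False]) ?B"
  proof (intro equalityI subsetI)
    fix v
    assume v: "v \<in> {v. length v = length (w @ [True]) \<and> num v < num (w @ [True])}"
    then have "num v < num (w @ [False]) \<or> num v = num (w @ [False])"
      by (auto simp: num_snoc)
    then show "v \<in> insert (w @ [False]) ?B"
      using v num_eq_imp_eq[of v "w @ [False]"] by auto
  qed (auto simp: num_snoc)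
  then show ?thesis
    unfolding yw_def by (simp add: finite_bool_lists_length)
qed

lemma yw_snoc: "yw p (w @ [b]) = yw p w + delta p w * (if b then 1 - p w else 0)"
  by (cases b) (simp_all add: yw_snoc_True yw_snoc_False delta_snoc0)

lemma fw_snoc_affine:
  fixes b :: bool
  assumes "has_nonneg_powser (fw f p w) c" "0 \<le> p w" "p w \<le> 1"
  defines "a \<equiv> if b then p w else 1 - p w" and "s \<equiv> if b then 1 - p w else 0"
  shows "\<exists>e. has_nonneg_powser (fw f p (w @ [b])) e"
    and "0 \<le> x \<Longrightarrow> ps_deriv (fw f p (w @ [b])) x = ennreal a * ps_deriv (fw f p w) (a * x + s)"
proof -
  let ?h = "\<lambda>x. fw f p w (a * x + s)"
  have as: "0 \<le> a" "0 \<le> s" "a + s \<le> 1"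
    using assms by (auto simp: a_def s_def)
  obtain d where h: "has_nonneg_powser ?h d"
    using has_nonneg_powser_affine[OF assms(1) as] by blast
  have "(\<exists>e. has_nonneg_powser (fw f p (w @ [b])) e) \<and> ps_deriv (fw f p (w @ [b])) = ps_deriv ?h"
  proof (cases b)
    case True
    then have "fw f p (w @ [b]) = (\<lambda>x. ?h x - ?h 0)"
      by (simp add: fw_snoc1 a_def s_def algebra_simps)
    then show ?thesis
      using has_nonneg_powser_minus_const[OF h] ps_deriv_minus_const[OF h] by auto
  next
    case False
    then have "fw f p (w @ [b]) = ?h"
      by (simp add: fw_snoc0 a_def s_def)
    then show ?thesis
      using h by auto
  qed
  then show "\<exists>e. has_nonneg_powser (fw f p (w @ [b])) e"
    and "0 \<le> x \<Longrightarrow> ps_deriv (fw f p (w @ [b])) x = ennreal a * ps_deriv (fw f p w) (a * x + s)"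
    using ps_deriv_affine[OF assms(1) as] by auto
qed

lemma ps_deriv_fw:
  assumes f: "has_nonneg_powser f q" and p: "\<And>v. length v < length w \<Longrightarrow> 0 \<le> p v \<and> p v \<le> 1"
  shows "(\<exists>c. has_nonneg_powser (fw f p w) c) \<and>
    (\<forall>x\<ge>0. ps_deriv (fw f p w) x = ennreal (delta p w) * ps_deriv f (yw p w + delta p w * x))"
  using p
proof (induction w rule: rev_induct)
  case Nil
  show ?case
    using f by (auto simp: fw_Nil delta_Nil yw_Nil)
next
  case (snoc b w)
  then obtain c where c: "has_nonneg_powser (fw f p w) c"
    and IH: "\<And>x. 0 \<le> x \<Longrightarrow> ps_deriv (fw f p w) x = ennreal (delta p w) * ps_deriv f (yw p w + delta p w * x)"
    by auto
  have pw: "0 \<le> p w" "p w \<le> 1"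
    using snoc.prems by auto
  define a where "a = (if b then p w else 1 - p w)"
  define s where "s = (if b then 1 - p w else 0)"
  have "0 \<le> a" "0 \<le> s"
    using pw by (auto simp: a_def s_def)
  have delta_wb: "delta p (w @ [b]) = a * delta p w"
    by (simp add: a_def delta_snoc)
  have yw_wb: "yw p (w @ [b]) = yw p w + delta p w * s"
    by (simp add: s_def yw_snoc)
  have "ps_deriv (fw f p (w @ [b])) x
      = ennreal (delta p (w @ [b])) * ps_deriv f (yw p (w @ [b]) + delta p (w @ [b]) * x)"
    if "0 \<le> x" for x
  proof -
    have arg: "yw p w + delta p w * (a * x + s) = yw p (w @ [b]) + delta p (w @ [b]) * x"
      unfolding delta_wb yw_wb by (simp add: algebra_simps)
    have factor: "ennreal a * ennreal (delta p w) = ennreal (delta p (w @ [b]))"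
      unfolding delta_wb using \<open>0 \<le> a\<close> by (rule ennreal_mult'[symmetric])
    have "ps_deriv (fw f p (w @ [b])) x = ennreal a * ps_deriv (fw f p w) (a * x + s)"
      using fw_snoc_affine(2)[OF c pw that] by (simp add: a_def s_def)
    also have "\<dots> = ennreal a * (ennreal (delta p w) * ps_deriv f (yw p w + delta p w * (a * x + s)))"
      using \<open>0 \<le> a\<close> \<open>0 \<le> s\<close> that by (simp add: IH)
    also have "\<dots> = ennreal (delta p (w @ [b])) * ps_deriv f (yw p (w @ [b]) + delta p (w @ [b]) * x)"
      by (simp only: arg factor[symmetric] mult.assoc)
    finally show ?thesis .
  qed
  then show ?case
    using fw_snoc_affine(1)[OF c pw] by blast
qed

theorem lemma2:
  fixes q :: "nat \<Rightarrow> real" and p :: "bool list \<Rightarrow> real" and k :: nat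
  assumes "q 0 = 0" and "\<forall>n. 0 \<le> q n" and "q sums 1"
    and "k \<ge> 1"
    and "\<forall>w. length w \<le> k - 1 \<longrightarrow> 0 \<le> p w \<and> p w \<le> 1"
  defines "f \<equiv> (\<lambda>x. \<Sum>n. q n * x ^ n)"
  shows "\<forall>w x. length w \<le> k \<and> x \<in> {0..1} \<longrightarrow>
           ps_deriv (fw f p w) x = ennreal (delta p w) * ps_deriv f (yw p w + delta p w * x)"
proof (intro allI impI)
  fix w :: "bool list" and x :: real
  assume wx: "length w \<le> k \<and> x \<in> {0..1}"
  have "has_nonneg_powser f q"
    unfolding f_def using assms(2,3) by (intro has_nonneg_powser_suminf) (auto simp: sums_iff)
  moreover have "0 \<le> p v \<and> p v \<le> 1" if "length v < length w" for v
    using assms(5) wx that by auto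
  ultimately show "ps_deriv (fw f p w) x = ennreal (delta p w) * ps_deriv f (yw p w + delta p w * x)"
    using ps_deriv_fw[of f q w p] wx by auto
qed

end
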